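(* For $\beta>1$, the sharp $\mathscr{S}^*_{\wp,n}$-radius of $\mathcal{M}_n(\beta)$ is $(2e(\beta-1)+1)^{-1/n}$.
   Context: $\mathbb{D}$ is the unit disk. For $n\ge1$, $\mathcal{A}_n$ is the class of analytic $f$ on $\mathbb{D}$ of the form $f(z)=z+\sum_{k\ge n+1}b_kz^k$, $\mathcal{A}=\mathcal{A}_1$. $f\prec g$ means $f=g\circ\omega$ for analytic $\omega:\mathbb{D}\to\mathbb{D}$, $\omega(0)=0$. $\wp(z)=1+ze^z$, $\mathscr{S}^*_\wp=\{f\in\mathcal{A}:zf'/f\prec\wp\}$, $\mathscr{S}^*_{\wp,n}=\mathcal{A}_n\cap\mathscr{S}^*_\wp$. $\mathcal{M}_n(\beta)=\{f\in\mathcal{A}_n:\operatorname{Re}(zf'(z)/f(z))<\beta\}$. For classes $G_1,G_2$, $R_{G_1}(G_2)$ is the largest $r_0\in(0,1]$ such that $r^{-1}f(rz)\in G_1$ for all $0<r\le r_0$ and all $f\in G_2$; "sharp" means it cannot be increased. *)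

theory Defs
  imports "HOL-Analysis.Analysis"
begin

abbreviation unit_disk :: "complex set" where
  "unit_disk \<equiv> ball 0 1"

text \<open>The class A_n: analytic f on the unit disk with f(z) = z + sum_{k>=n+1} b_k z^k,
  i.e. f(0)=0, f'(0)=1 and the Taylor coefficients of order 2..n vanish.\<close>
definition class_A :: "nat \<Rightarrow> (complex \<Rightarrow> complex) set" where
  "class_A n = {f. f holomorphic_on unit_disk \<and> f 0 = 0 \<and> deriv f 0 = 1 \<and>
      (\<forall>k. 2 \<le> k \<and> k \<le> n \<longrightarrow> (deriv ^^ k) f 0 = 0)}"

definition subordinate :: "(complex \<Rightarrow> complex) \<Rightarrow> (complex \<Rightarrow> complex) \<Rightarrow> bool" where
  "subordinate f g \<longleftrightarrow> (\<exists>\<omega>. \<omega> holomorphic_on unit_disk \<and> \<omega> ` unit_disk \<subseteq> unit_disk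
      \<and> \<omega> 0 = 0 \<and> (\<forall>z\<in>unit_disk. f z = g (\<omega> z)))"

text \<open>The function z f'(z)/f(z), with its removable value 1 at z = 0 (for f in A).\<close>
definition zdlog :: "(complex \<Rightarrow> complex) \<Rightarrow> complex \<Rightarrow> complex" where
  "zdlog f z = (if z = 0 then 1 else z * deriv f z / f z)"

definition wp :: "complex \<Rightarrow> complex" where
  "wp z = 1 + z * exp z"

text \<open>S*_{wp,n}. (Well-definedness of z f'/f requires f z \<noteq> 0 for z \<noteq> 0.)\<close>
definition S_wp :: "nat \<Rightarrow> (complex \<Rightarrow> complex) set" where
  "S_wp n = {f \<in> class_A n. (\<forall>z\<in>unit_disk - {0}. f z \<noteq> 0) \<and> subordinate (zdlog f) wp}"

definition class_M :: "nat \<Rightarrow> real \<Rightarrow> (complex \<Rightarrow> complex) set" where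
  "class_M n \<beta> = {f \<in> class_A n. (\<forall>z\<in>unit_disk - {0}. f z \<noteq> 0) \<and>
      (\<forall>z\<in>unit_disk. Re (zdlog f z) < \<beta>)}"

definition admissible_radii ::
  "(complex \<Rightarrow> complex) set \<Rightarrow> (complex \<Rightarrow> complex) set \<Rightarrow> real set" where
  "admissible_radii G1 G2 = {r0. 0 < r0 \<and> r0 \<le> 1 \<and>
      (\<forall>r. 0 < r \<and> r \<le> r0 \<longrightarrow> (\<forall>f\<in>G2. (\<lambda>z. f (of_real r * z) / of_real r) \<in> G1))}"

definition is_sharp_radius ::
  "(complex \<Rightarrow> complex) set \<Rightarrow> (complex \<Rightarrow> complex) set \<Rightarrow> real \<Rightarrow> bool" where
  "is_sharp_radius G1 G2 R \<longleftrightarrow> R \<in> admissible_radii G1 G2 \<and> (\<forall>r\<in>admissible_radii G1 G2. r \<le> R)"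

end

theory Submission
  imports Defs "HOL-Complex_Analysis.Complex_Analysis"
begin

text \<open>Write p = z f'/f for f in M_n(beta). Since Re p < beta, p is closer to 1 than to
  2 beta - 1, so omega = (p - 1)/(p - (2 beta - 1)) maps the disk into itself and vanishes to
  order n at 0; a Schwarz-lemma argument gives |omega(z)| \<le> |z|^n and therefore
  |p(z) - 1| \<le> 2 (beta - 1) |z|^n / (1 - |z|^n). This is below 1/e exactly when
  |z|^n < 1/(2e(beta - 1) + 1). On the disk of radius 1/e the map u \<mapsto> u e^u has a holomorphic
  inverse with values in the unit disk (a contraction argument for u = w e^-u), and composing
  it with p - 1 gives the subordination p \<prec> 1 + z e^z.

  Sharpness comes from f(z) = z (1 - z^n)^(2(beta-1)/n), for which
  p(x) = 1 - 2 (beta - 1) x^n / (1 - x^n) on the real axis falls below 1 - 1/e beyond the radius.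
  But 1 + u e^u with |u| < 1 is real only for real u, and then it is at least 1 - 1/e.\<close>

section \<open>The map u e^u on the unit disk\<close>

lemma norm_exp_minus_le_exp_1:
  fixes z :: complex
  assumes "norm z \<le> 1"
  shows "norm (exp (- z)) \<le> exp 1"
proof -
  have "- Re z \<le> 1" using assms abs_Re_le_cmod[of z] by linarith
  then show ?thesis by (simp add: norm_exp)
qed

lemma exp_minus_lipschitz_cball:
  fixes u v :: complex
  assumes "u \<in> cball 0 1" "v \<in> cball 0 1"
  shows "norm (exp (- u) - exp (- v)) \<le> exp 1 * norm (u - v)"
proof (rule field_differentiable_bound[of "cball 0 1" _ "\<lambda>z. - exp (- z)"])
  fix z :: complex assume "z \<in> cball 0 1"
  then show "norm (- exp (- z)) \<le> exp 1" using norm_exp_minus_le_exp_1[of z] by simp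
qed (use assms in \<open>auto intro!: derivative_eq_intros\<close>)

lemma mult_exp_surjective_small:
  fixes w :: complex
  assumes "norm w < 1 / exp 1"
  obtains u where "norm u < 1" "u * exp u = w"
proof -
  define T where "T u = w * exp (- u)" for u
  have contraction: "norm w * exp 1 < 1" using assms by (simp add: field_simps)
  have norm_T: "norm (T u) < 1" if "u \<in> cball 0 1" for u
  proof -
    have "norm (T u) \<le> norm w * exp 1"
      using that norm_exp_minus_le_exp_1[of u]
      by (simp add: T_def norm_mult mult_left_mono)
    with contraction show ?thesis by simp
  qed
  have "\<exists>!u\<in>cball 0 1. T u = u"
  proof (rule Banach_fix)
    fix x y :: complex assume "x \<in> cball 0 1" "y \<in> cball 0 1"
    then have "norm w * norm (exp (- x) - exp (- y)) \<le> norm w * (exp 1 * norm (x - y))"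
      by (simp add: mult_left_mono exp_minus_lipschitz_cball)
    then show "dist (T x) (T y) \<le> norm w * exp 1 * dist x y"
      by (simp add: T_def dist_norm norm_mult[symmetric] right_diff_distrib mult_ac)
  next
    show "T ` cball 0 1 \<subseteq> cball 0 1" using norm_T by (auto simp: less_imp_le)
  qed (use contraction in \<open>simp_all add: complete_eq_closed\<close>)
  then obtain u where u: "u \<in> cball 0 1" "T u = u" by blast
  show ?thesis
  proof
    show "norm u < 1" using norm_T[OF u(1)] u(2) by simp
    show "u * exp u = w" using u(2)
      by (metis T_def exp_minus_inverse mult.assoc mult.commute mult.right_neutral)
  qed
qed

lemma mult_exp_injective_small:
  fixes u v :: complex
  assumes "norm u < 1" "norm v < 1" "u * exp u = v * exp v" "norm (u * exp u) < 1 / exp 1"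
  shows "u = v"
proof -
  define w where "w = u * exp u"
  have uw: "u = w * exp (- u)" by (simp add: w_def exp_minus field_simps)
  have vw: "v = w * exp (- v)" using assms(3) by (simp add: w_def exp_minus field_simps)
  have "norm (u - v) = norm w * norm (exp (- u) - exp (- v))"
    by (subst uw, subst vw) (simp add: norm_mult[symmetric] right_diff_distrib)
  also have "\<dots> \<le> norm w * (exp 1 * norm (u - v))"
    using exp_minus_lipschitz_cball[of u v] assms by (simp add: mult_left_mono)
  finally have "norm (u - v) \<le> (norm w * exp 1) * norm (u - v)" by (simp add: mult_ac)
  moreover have "norm w * exp 1 < 1" using assms(4) by (simp add: w_def field_simps)
  ultimately have "norm (u - v) \<le> 0"
    by (smt (verit) mult_le_cancel_right1 norm_ge_zero)
  then show ?thesis by simp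
qed

lemma mult_exp_holomorphic_inverse:
  obtains \<phi> where "\<phi> holomorphic_on ball 0 (1 / exp 1)" "\<phi> 0 = 0"
    "\<And>w. w \<in> ball 0 (1 / exp 1) \<Longrightarrow> norm (\<phi> w) < 1 \<and> \<phi> w * exp (\<phi> w) = w"
proof -
  define h where "h u = u * exp u" for u :: complex
  define S where "S = ball 0 1 \<inter> h -` ball 0 (1 / exp 1)"
  have "open S"
    unfolding S_def h_def by (intro open_Int open_vimage continuous_intros) auto
  moreover have "h holomorphic_on S" unfolding h_def by (intro holomorphic_intros)
  moreover have "inj_on h S"
    by (rule inj_onI) (auto simp: S_def h_def intro: mult_exp_injective_small)
  ultimately obtain g where g: "g holomorphic_on h ` S" "\<And>z. z \<in> S \<Longrightarrow> g (h z) = z"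
    using holomorphic_has_inverse by blast
  have image: "h ` S = ball 0 (1 / exp 1)"
  proof
    show "ball 0 (1 / exp 1) \<subseteq> h ` S"
    proof
      fix w :: complex assume w: "w \<in> ball 0 (1 / exp 1)"
      then obtain u where "norm u < 1" "u * exp u = w"
        using mult_exp_surjective_small by auto
      with w show "w \<in> h ` S" unfolding S_def h_def by (auto intro!: image_eqI[of _ _ u])
    qed
  qed (auto simp: S_def)
  show ?thesis
  proof
    show "g holomorphic_on ball 0 (1 / exp 1)" using g(1) image by simp
    have "0 \<in> S" by (simp add: S_def h_def)
    then show "g 0 = 0" using g(2)[of 0] by (simp add: h_def)
    fix w :: complex assume "w \<in> ball 0 (1 / exp 1)"
    then obtain u where "u \<in> S" "w = h u" using image by blast
    then show "norm (g w) < 1 \<and> g w * exp (g w) = w" using g(2) by (auto simp: S_def h_def)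
  qed
qed

lemma subordinate_wp_if_near_1:
  assumes holp: "p holomorphic_on unit_disk" and p0: "p 0 = 1"
    and near: "\<And>z. z \<in> unit_disk \<Longrightarrow> norm (p z - 1) < 1 / exp 1"
  shows "subordinate p wp"
proof -
  obtain \<phi> where hol\<phi>: "\<phi> holomorphic_on ball 0 (1 / exp 1)" and "\<phi> 0 = 0"
    and \<phi>: "\<And>w. w \<in> ball 0 (1 / exp 1) \<Longrightarrow> norm (\<phi> w) < 1 \<and> \<phi> w * exp (\<phi> w) = w"
    using mult_exp_holomorphic_inverse by blast
  have into: "p z - 1 \<in> ball 0 (1 / exp 1)" if "z \<in> unit_disk" for z
    using near[OF that] by simp
  show ?thesis
    unfolding subordinate_def
  proof (intro exI[of _ "\<lambda>z. \<phi> (p z - 1)"] conjI ballI)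
    have "(\<lambda>z. p z - 1) holomorphic_on unit_disk" by (intro holomorphic_intros holp)
    moreover have "(\<lambda>z. p z - 1) ` unit_disk \<subseteq> ball 0 (1 / exp 1)" using into by blast
    ultimately show "(\<lambda>z. \<phi> (p z - 1)) holomorphic_on unit_disk"
      using holomorphic_on_compose_gen[OF _ hol\<phi>] by (simp add: o_def)
    show "(\<lambda>z. \<phi> (p z - 1)) ` unit_disk \<subseteq> unit_disk" using \<phi> into by auto
    show "\<phi> (p 0 - 1) = 0" using p0 \<open>\<phi> 0 = 0\<close> by simp
    fix z assume "z \<in> unit_disk"
    then show "p z = wp (\<phi> (p z - 1))" using \<phi>[OF into] by (simp add: wp_def)
  qed
qed

lemma Im_eq_0_if_Im_mult_exp_eq_0:
  fixes u :: complex
  assumes "norm u < 1" "Im (u * exp u) = 0"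
  shows "Im u = 0"
proof -
  define a b where "a = Re u" and "b = Im u"
  have "Im (u * exp u) = exp a * (a * sin b + b * cos b)"
    by (simp add: a_def b_def Re_exp Im_exp algebra_simps)
  then have "a * sin b = - (b * cos b)" using assms(2) by simp
  then have "a\<^sup>2 * (sin b)\<^sup>2 = b\<^sup>2 * (cos b)\<^sup>2"
    by (metis power_mult_distrib power2_minus)
  then have "(a\<^sup>2 + b\<^sup>2) * (sin b)\<^sup>2 = b\<^sup>2 * ((sin b)\<^sup>2 + (cos b)\<^sup>2)"
    by (simp only: distrib_left distrib_right add.commute)
  then have eq: "(a\<^sup>2 + b\<^sup>2) * (sin b)\<^sup>2 = b\<^sup>2" by simp
  have "(sin b)\<^sup>2 \<le> b\<^sup>2"
    using abs_sin_x_le_abs_x[of b] by (metis abs_ge_zero power2_abs power_mono)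
  then have "b\<^sup>2 \<le> (a\<^sup>2 + b\<^sup>2) * b\<^sup>2"
    using eq mult_left_mono[of "(sin b)\<^sup>2" "b\<^sup>2" "a\<^sup>2 + b\<^sup>2"] by simp
  then have "b\<^sup>2 * (1 - (a\<^sup>2 + b\<^sup>2)) \<le> 0" by (simp add: algebra_simps)
  moreover have "a\<^sup>2 + b\<^sup>2 < 1"
    using assms(1) by (simp add: a_def b_def cmod_def)
  ultimately have "b\<^sup>2 \<le> 0"
    by (metis diff_gt_0_iff_gt mult_le_0_iff not_le zero_le_power2)
  then show ?thesis by (simp add: b_def)
qed

lemma mult_exp_ge:
  fixes a :: real
  shows "a * exp a \<ge> - (1 / exp 1)"
proof -
  have "- a \<le> exp (- a - 1)" using exp_ge_add_one_self[of "- a - 1"] by simp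
  then have "- a * exp a \<le> exp (- a - 1) * exp a" by (rule mult_right_mono) simp
  also have "\<dots> = 1 / exp 1" by (simp add: exp_diff exp_minus field_simps)
  finally show ?thesis by simp
qed

lemma wp_real_value_ge:
  assumes "norm u < 1" "wp u = of_real y"
  shows "y \<ge> 1 - 1 / exp 1"
proof -
  have ue: "u * exp u = of_real (y - 1)" using assms(2) by (simp add: wp_def algebra_simps)
  then have "Im u = 0" using Im_eq_0_if_Im_mult_exp_eq_0[OF assms(1)] by simp
  then have "u = of_real (Re u)" by (simp add: complex_eq_iff)
  with ue have "Re u * exp (Re u) = y - 1"
    by (metis exp_of_real of_real_eq_iff of_real_mult)
  with mult_exp_ge[of "Re u"] show ?thesis by simp
qed

section \<open>The class A_n and dilations\<close>

lemma holomorphic_factor_power_at_0: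
  fixes f :: "complex \<Rightarrow> complex"
  assumes holf: "f holomorphic_on unit_disk" and zero: "\<And>i. i < m \<Longrightarrow> (deriv ^^ i) f 0 = 0"
  obtains g where "g holomorphic_on unit_disk" "\<And>w. w \<in> unit_disk \<Longrightarrow> f w = w ^ m * g w"
proof -
  define c where "c i = (deriv ^^ (i + m)) f 0 / fact (i + m)" for i
  define g where "g w = (\<Sum>i. c i * w ^ i)" for w
  have sums_g: "(\<lambda>i. c i * w ^ i) sums g w" and f_eq: "f w = w ^ m * g w"
    if w: "w \<in> unit_disk" for w
  proof -
    have "(\<lambda>i. (deriv ^^ i) f 0 / fact i * (w - 0) ^ i) sums f w"
      by (rule holomorphic_power_series[OF holf w])
    then have sums_f: "(\<lambda>i. w ^ m * (c i * w ^ i)) sums f w"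
      using sums_iff_shift'[of "\<lambda>i. (deriv ^^ i) f 0 / fact i * w ^ i" m "f w"]
      by (simp add: zero c_def power_add mult_ac)
    have "summable (\<lambda>i. c i * w ^ i)"
    proof (cases "w = 0")
      case False
      then show ?thesis
        using summable_mult[OF sums_summable[OF sums_f], of "1 / w ^ m"] by simp
    qed (auto intro!: summable_finite[of "{0}"])
    then show "(\<lambda>i. c i * w ^ i) sums g w" by (simp add: summable_sums_iff g_def)
    from sums_mult[OF this, of "w ^ m"] show "f w = w ^ m * g w"
      by (rule sums_unique2[OF sums_f])
  qed
  have "g holomorphic_on unit_disk"
    using power_series_holomorphic[of 0 1 c g] sums_g by simp
  with f_eq show ?thesis using that by blast
qed

lemma higher_deriv_power_factor_at_0:
  fixes f g :: "complex \<Rightarrow> complex"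
  assumes holf: "f holomorphic_on unit_disk" and holg: "g holomorphic_on unit_disk"
    and f_eq: "\<And>w. w \<in> unit_disk \<Longrightarrow> f w = w ^ m * g w" and "k < m"
  shows "(deriv ^^ k) f 0 = 0"
proof -
  have "(deriv ^^ k) f 0 = (deriv ^^ k) (\<lambda>w. w ^ m * g w) 0"
    by (rule higher_deriv_transform_within_open[OF holf _ _ _ f_eq])
       (auto intro!: holomorphic_intros holg)
  also have "\<dots> = (\<Sum>i = 0..k. of_nat (k choose i) * (deriv ^^ i) (\<lambda>w. w ^ m) 0 * (deriv ^^ (k - i)) g 0)"
    by (rule higher_deriv_mult[OF _ holg]) (auto intro!: holomorphic_intros)
  also have "\<dots> = 0"
  proof (rule sum.neutral, intro ballI)
    fix i assume "i \<in> {0..k}"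
    with \<open>k < m\<close> have "(deriv ^^ i) (\<lambda>w. w ^ m) (0::complex) = 0"
      using higher_deriv_power[of i 0 m 0] by (simp add: power_0_left)
    then show "of_nat (k choose i) * (deriv ^^ i) (\<lambda>w. w ^ m) 0 * (deriv ^^ (k - i)) g 0 = 0"
      by simp
  qed
  finally show ?thesis .
qed

lemma class_A_iff_power_factor:
  assumes "n \<ge> 1"
  shows "f \<in> class_A n \<longleftrightarrow> f holomorphic_on unit_disk \<and>
     (\<exists>g. g holomorphic_on unit_disk \<and> (\<forall>w\<in>unit_disk. f w - w = w ^ (n + 1) * g w))"
proof -
  have higher_deriv_diff_id: "(deriv ^^ k) (\<lambda>w. f w - w) 0 = (deriv ^^ k) f 0 - (deriv ^^ k) (\<lambda>w. w) 0"
    if "f holomorphic_on unit_disk" for k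
    by (rule higher_deriv_diff) (auto intro!: holomorphic_intros that)
  show ?thesis
  proof
    assume fA: "f \<in> class_A n"
    then have holf: "f holomorphic_on unit_disk" by (simp add: class_A_def)
    have "(deriv ^^ k) f 0 = (deriv ^^ k) (\<lambda>w. w) 0" if "k < n + 1" for k
      using fA that by (cases "k = 0"; cases "k = 1") (auto simp: class_A_def)
    then have "(deriv ^^ k) (\<lambda>w. f w - w) 0 = 0" if "k < n + 1" for k
      using that by (simp add: higher_deriv_diff_id[OF holf])
    moreover have "(\<lambda>w. f w - w) holomorphic_on unit_disk" by (intro holomorphic_intros holf)
    ultimately obtain g where "g holomorphic_on unit_disk" "\<And>w. w \<in> unit_disk \<Longrightarrow> f w - w = w ^ (n + 1) * g w"
      using holomorphic_factor_power_at_0[of "\<lambda>w. f w - w" "n + 1"] by blast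
    with holf show "f holomorphic_on unit_disk \<and>
        (\<exists>g. g holomorphic_on unit_disk \<and> (\<forall>w\<in>unit_disk. f w - w = w ^ (n + 1) * g w))"
      by blast
  next
    assume "f holomorphic_on unit_disk \<and>
        (\<exists>g. g holomorphic_on unit_disk \<and> (\<forall>w\<in>unit_disk. f w - w = w ^ (n + 1) * g w))"
    then obtain g where holf: "f holomorphic_on unit_disk" and holg: "g holomorphic_on unit_disk"
      and f_eq: "\<And>w. w \<in> unit_disk \<Longrightarrow> f w - w = w ^ (n + 1) * g w" by blast
    have "(deriv ^^ k) f 0 = (deriv ^^ k) (\<lambda>w. w) 0" if "k < n + 1" for k
      using higher_deriv_power_factor_at_0[of "\<lambda>w. f w - w", OF _ holg f_eq that] holf
      by (simp add: higher_deriv_diff_id holomorphic_intros)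
    from this[of 0] this[of 1] this show "f \<in> class_A n"
      using holf \<open>n \<ge> 1\<close> by (auto simp: class_A_def)
  qed
qed

lemma zdlog_class_A_power_factor:
  fixes f :: "complex \<Rightarrow> complex"
  assumes fA: "f \<in> class_A n" and n: "n \<ge> 1" and nz: "\<forall>z\<in>unit_disk - {0}. f z \<noteq> 0"
  obtains K where "K holomorphic_on unit_disk" "\<And>z. z \<in> unit_disk \<Longrightarrow> zdlog f z = 1 + z ^ n * K z"
proof -
  obtain H where holH: "H holomorphic_on unit_disk"
    and f_eq: "\<And>w. w \<in> unit_disk \<Longrightarrow> f w - w = w ^ (n + 1) * H w"
    using fA class_A_iff_power_factor[OF n] by blast
  define F where "F z = 1 + z ^ n * H z" for z
  have fF: "f z = z * F z" if "z \<in> unit_disk" for z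
    using f_eq[OF that] by (simp add: F_def algebra_simps)
  have F_nz: "F z \<noteq> 0" if "z \<in> unit_disk" for z
    using n nz fF[OF that] that by (cases "z = 0") (auto simp: F_def power_0_left)
  define K where "K z = (of_nat n * H z + z * deriv H z) / F z" for z
  show ?thesis
  proof
    show "K holomorphic_on unit_disk"
      unfolding K_def F_def using F_nz
      by (intro holomorphic_intros holH holomorphic_deriv) (auto simp: F_def)
    fix z :: complex assume z: "z \<in> unit_disk"
    show "zdlog f z = 1 + z ^ n * K z"
    proof (cases "z = 0")
      case False
      have zz: "z * z ^ (n - 1) = z ^ n" using n by (cases n) auto
      have "((\<lambda>w. w + w ^ (n + 1) * H w) has_field_derivative
              1 + of_nat (n + 1) * z ^ n * H z + z ^ (n + 1) * deriv H z) (at z)"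
        using holH z zz by (auto intro!: derivative_eq_intros holomorphic_derivI simp: algebra_simps)
      then have "(f has_field_derivative
              1 + of_nat (n + 1) * z ^ n * H z + z ^ (n + 1) * deriv H z) (at z)"
        by (rule has_field_derivative_transform_within_open[where S = unit_disk])
           (use z f_eq in \<open>auto simp: algebra_simps\<close>)
      then have "deriv f z = 1 + of_nat (n + 1) * z ^ n * H z + z ^ (n + 1) * deriv H z"
        by (rule DERIV_imp_deriv)
      then have "zdlog f z = (1 + of_nat (n + 1) * z ^ n * H z + z ^ (n + 1) * deriv H z) / F z"
        using False by (simp add: zdlog_def fF[OF z])
      also have "\<dots> = 1 + z ^ n * K z"
        using F_nz[OF z] by (simp add: K_def F_def field_simps)
      finally show ?thesis .
    qed (use n in \<open>simp add: zdlog_def power_0_left\<close>)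
  qed
qed

lemma holomorphic_zdlog_class_A:
  assumes "f \<in> class_A n" "n \<ge> 1" "\<forall>z\<in>unit_disk - {0}. f z \<noteq> 0"
  shows "zdlog f holomorphic_on unit_disk"
proof -
  obtain K where "K holomorphic_on unit_disk" and K: "\<And>z. z \<in> unit_disk \<Longrightarrow> zdlog f z = 1 + z ^ n * K z"
    using zdlog_class_A_power_factor[OF assms] by blast
  then have "(\<lambda>z. 1 + z ^ n * K z) holomorphic_on unit_disk" by (intro holomorphic_intros)
  then show ?thesis by (rule holomorphic_transform) (use K in auto)
qed

definition dilate :: "real \<Rightarrow> (complex \<Rightarrow> complex) \<Rightarrow> complex \<Rightarrow> complex" where
  "dilate r f z = f (of_real r * z) / of_real r"

lemma dilate_eq: "dilate r f = (\<lambda>z. f (of_real r * z) / of_real r)"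
  by (simp add: fun_eq_iff dilate_def)

lemma of_real_mult_in_unit_disk:
  assumes "0 \<le> r" "r \<le> 1" "z \<in> unit_disk"
  shows "of_real r * z \<in> unit_disk"
proof -
  have "norm (of_real r * z) = r * norm z" using assms by (simp add: norm_mult)
  also have "\<dots> < 1" using assms by (smt (verit) mem_ball_0 mult_left_le_one_le norm_ge_zero)
  finally show ?thesis by simp
qed

lemma holomorphic_on_dilate_arg:
  assumes "f holomorphic_on unit_disk" "0 \<le> r" "r \<le> 1"
  shows "(\<lambda>z. f (of_real r * z)) holomorphic_on unit_disk"
proof -
  have "(\<lambda>z. of_real r * z) ` unit_disk \<subseteq> unit_disk"
    using of_real_mult_in_unit_disk[OF assms(2,3)] by blast
  from holomorphic_on_compose_gen[OF _ assms(1) this] show ?thesis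
    by (simp add: o_def holomorphic_intros)
qed

lemma class_A_dilate:
  assumes fA: "f \<in> class_A n" and r: "0 < r" "r \<le> 1"
  shows "dilate r f \<in> class_A n"
proof -
  have holf: "f holomorphic_on unit_disk" using fA by (simp add: class_A_def)
  have dk: "(deriv ^^ k) (dilate r f) 0 = of_real r ^ k / of_real r * (deriv ^^ k) f 0" for k
  proof -
    have "dilate r f = (\<lambda>z. inverse (of_real r) * f (of_real r * z))"
      by (auto simp: dilate_def divide_inverse)
    then have "(deriv ^^ k) (dilate r f) 0 = inverse (of_real r) * (deriv ^^ k) (\<lambda>z. f (of_real r * z)) 0"
      using higher_deriv_cmult[OF holomorphic_on_dilate_arg[OF holf], of r 0 k] r by simp
    also have "(deriv ^^ k) (\<lambda>z. f (of_real r * z)) 0 = of_real r ^ k * (deriv ^^ k) f 0"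
      using higher_deriv_compose_linear[OF holf, of unit_disk 0 "of_real r" k] of_real_mult_in_unit_disk r
      by simp
    finally show ?thesis by (simp add: field_simps)
  qed
  show ?thesis
    unfolding class_A_def
  proof (intro CollectI conjI allI impI)
    have "(\<lambda>z. f (of_real r * z) / of_real r) holomorphic_on unit_disk"
      using r by (intro holomorphic_intros holomorphic_on_dilate_arg holf) auto
    then show "dilate r f holomorphic_on unit_disk" by (simp add: dilate_def[abs_def])
    show "dilate r f 0 = 0" using fA by (simp add: dilate_def class_A_def)
    show "deriv (dilate r f) 0 = 1" using dk[of 1] fA r by (simp add: class_A_def)
    fix k assume "2 \<le> k \<and> k \<le> n"
    then show "(deriv ^^ k) (dilate r f) 0 = 0" using dk[of k] fA by (simp add: class_A_def)
  qed
qed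

lemma zdlog_dilate:
  assumes holf: "f holomorphic_on unit_disk" and r: "0 < r" "r \<le> 1" and z: "z \<in> unit_disk"
  shows "zdlog (dilate r f) z = zdlog f (of_real r * z)"
proof (cases "z = 0")
  case False
  have "(f has_field_derivative deriv f (of_real r * z)) (at (of_real r * z))"
    using holf of_real_mult_in_unit_disk[OF _ _ z] r by (auto intro!: holomorphic_derivI)
  then have "(dilate r f has_field_derivative deriv f (of_real r * z)) (at z)"
    unfolding dilate_def[abs_def] using r
    by (auto intro!: derivative_eq_intros DERIV_chain2[where g = "\<lambda>w. of_real r * w"])
  then show ?thesis
    using False r by (simp add: DERIV_imp_deriv zdlog_def dilate_def field_simps)
qed (simp add: zdlog_def)

section \<open>Growth of z f'/f on M_n(beta)\<close>

lemma norm_le_1_if_power_mult_bounded: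
  fixes \<Phi> :: "complex \<Rightarrow> complex"
  assumes hol: "\<Phi> holomorphic_on unit_disk"
    and bounded: "\<And>w. w \<in> unit_disk \<Longrightarrow> norm (w ^ n * \<Phi> w) < 1" and z: "z \<in> unit_disk"
  shows "norm (\<Phi> z) \<le> 1"
proof -
  have "norm (\<Phi> z) \<le> 1 / s ^ n" if s: "s \<in> {norm z<..<1}" for s
  proof (rule maximum_modulus_frontier[of \<Phi> "cball 0 s"])
    have "cball 0 s \<subseteq> unit_disk" using s by auto
    then have "\<Phi> holomorphic_on cball 0 s" using hol by (rule holomorphic_on_subset[rotated])
    then show "\<Phi> holomorphic_on interior (cball 0 s)" "continuous_on (closure (cball 0 s)) \<Phi>"
      by (auto intro: holomorphic_on_subset holomorphic_on_imp_continuous_on)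
    show "z \<in> cball 0 s" using s by simp
    fix w :: complex assume "w \<in> frontier (cball 0 s)"
    then have w: "norm w = s" using s by (simp add: frontier_cball)
    with bounded[of w] s have "s ^ n * norm (\<Phi> w) < 1" by (simp add: norm_mult norm_power)
    moreover have "s > 0" using s by (auto intro: le_less_trans[OF norm_ge_zero])
    ultimately show "norm (\<Phi> w) \<le> 1 / s ^ n" by (simp add: field_simps)
  qed simp
  then have "eventually (\<lambda>s. norm (\<Phi> z) \<le> 1 / s ^ n) (at_left 1)"
    using eventually_at_left_real[of "norm z" 1] z by (auto elim: eventually_mono)
  moreover have "((\<lambda>s. 1 / s ^ n) \<longlongrightarrow> 1) (at_left (1::real))"
    by (auto intro!: tendsto_eq_intros)
  ultimately show ?thesis by (intro tendsto_lowerbound) auto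
qed

lemma dist_1_less_dist_reflection:
  fixes p :: complex
  assumes "Re p < \<beta>" "\<beta> > 1"
  shows "norm (p - 1) < norm (p - of_real (2 * \<beta> - 1))"
proof -
  have "(Re p - (2 * \<beta> - 1))\<^sup>2 - (Re p - 1)\<^sup>2 = 4 * (\<beta> - 1) * (\<beta> - Re p)"
    by (simp add: power2_eq_square algebra_simps)
  also have "\<dots> > 0" using assms by simp
  finally have "(norm (p - 1))\<^sup>2 < (norm (p - of_real (2 * \<beta> - 1)))\<^sup>2"
    by (simp add: cmod_power2)
  then show ?thesis by (rule power2_less_imp_less) simp
qed

lemma norm_sub_1_le_if_norm_Moebius_le:
  fixes p c :: complex
  assumes "p \<noteq> c" "norm ((p - 1) / (p - c)) \<le> t" "t < 1"
  shows "norm (p - 1) \<le> norm (1 - c) * t / (1 - t)"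
proof -
  define \<omega> where "\<omega> = (p - 1) / (p - c)"
  have "(p - 1) * (1 - \<omega>) = \<omega> * (1 - c)"
    using assms(1) by (simp add: \<omega>_def field_simps)
  then have eq: "norm (p - 1) * norm (1 - \<omega>) = norm (1 - c) * norm \<omega>"
    by (metis norm_mult mult.commute)
  have "norm \<omega> < 1" and "0 \<le> t" using assms by (simp_all add: \<omega>_def order_trans[OF norm_ge_zero])
  have "norm (p - 1) * (1 - norm \<omega>) \<le> norm (p - 1) * norm (1 - \<omega>)"
    using norm_triangle_ineq2[of 1 \<omega>] by (intro mult_left_mono) auto
  then have "norm (p - 1) \<le> norm (1 - c) * norm \<omega> / (1 - norm \<omega>)"
    using \<open>norm \<omega> < 1\<close> by (simp add: eq pos_le_divide_eq)
  also have "\<dots> \<le> norm (1 - c) * t / (1 - t)"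
    using assms \<open>0 \<le> t\<close> by (intro frac_le mult_left_mono) (auto simp: \<omega>_def)
  finally show ?thesis .
qed

lemma class_M_zdlog_Moebius_bound:
  assumes fM: "f \<in> class_M n \<beta>" and n: "n \<ge> 1" and \<beta>: "\<beta> > 1" and z: "z \<in> unit_disk"
  defines "c \<equiv> complex_of_real (2 * \<beta> - 1)"
  shows "zdlog f z \<noteq> c" "norm ((zdlog f z - 1) / (zdlog f z - c)) \<le> norm z ^ n"
proof -
  have fA: "f \<in> class_A n" and nz: "\<forall>z\<in>unit_disk - {0}. f z \<noteq> 0"
    and Re_less: "\<And>w. w \<in> unit_disk \<Longrightarrow> Re (zdlog f w) < \<beta>"
    using fM by (auto simp: class_M_def)
  obtain K where holK: "K holomorphic_on unit_disk"
    and K: "\<And>w. w \<in> unit_disk \<Longrightarrow> zdlog f w = 1 + w ^ n * K w"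
    using zdlog_class_A_power_factor[OF fA n nz] by blast
  define p where "p = zdlog f"
  have closer: "norm (p w - 1) < norm (p w - c)" if "w \<in> unit_disk" for w
    using dist_1_less_dist_reflection[OF Re_less[OF that] \<beta>] by (simp add: p_def c_def)
  then have p_c: "p w - c \<noteq> 0" if "w \<in> unit_disk" for w
    using that by fastforce
  then show "zdlog f z \<noteq> c" using z by (simp add: p_def)
  have power_factor: "(p w - 1) / (p w - c) = w ^ n * (K w / (p w - c))" if "w \<in> unit_disk" for w
    using K[OF that] by (simp add: p_def)
  have "norm (K z / (p z - c)) \<le> 1"
  proof (rule norm_le_1_if_power_mult_bounded[OF _ _ z])
    have "p holomorphic_on unit_disk"
      unfolding p_def by (rule holomorphic_zdlog_class_A[OF fA n nz])
    then show "(\<lambda>w. K w / (p w - c)) holomorphic_on unit_disk"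
      using p_c by (intro holomorphic_intros holK) auto
    fix w :: complex assume w: "w \<in> unit_disk"
    have "norm (w ^ n * (K w / (p w - c))) = norm (p w - 1) / norm (p w - c)"
      by (simp only: power_factor[OF w, symmetric] norm_divide)
    then show "norm (w ^ n * (K w / (p w - c))) < 1"
      using closer[OF w] p_c[OF w] by (simp add: divide_less_eq)
  qed
  moreover have "norm ((p z - 1) / (p z - c)) = norm z ^ n * norm (K z / (p z - c))"
    by (simp only: power_factor[OF z] norm_mult norm_power)
  ultimately show "norm ((zdlog f z - 1) / (zdlog f z - c)) \<le> norm z ^ n"
    by (simp add: mult_left_le p_def)
qed

lemma class_M_zdlog_bound:
  assumes "f \<in> class_M n \<beta>" and n: "n \<ge> 1" and \<beta>: "\<beta> > 1" and z: "z \<in> unit_disk"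
  shows "norm (zdlog f z - 1) \<le> 2 * (\<beta> - 1) * norm z ^ n / (1 - norm z ^ n)"
proof -
  have "norm z ^ n < 1" using z n by (simp add: power_less_one_iff)
  with class_M_zdlog_Moebius_bound[OF assms]
  have "norm (zdlog f z - 1) \<le> norm (1 - complex_of_real (2 * \<beta> - 1)) * norm z ^ n / (1 - norm z ^ n)"
    by (intro norm_sub_1_le_if_norm_Moebius_le)
  also have "norm (1 - complex_of_real (2 * \<beta> - 1)) = 2 * (\<beta> - 1)"
    using \<beta> norm_of_real[of "2 - 2 * \<beta>"] by simp
  finally show ?thesis .
qed

lemma class_M_zdlog_near_1:
  assumes "f \<in> class_M n \<beta>" "n \<ge> 1" "\<beta> > 1" "z \<in> unit_disk"
    and small: "norm z ^ n < 1 / (2 * exp 1 * (\<beta> - 1) + 1)"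
  shows "norm (zdlog f z - 1) < 1 / exp 1"
proof -
  define x where "x = norm z ^ n"
  have x: "0 \<le> x" "x < 1" using assms by (simp_all add: x_def power_less_one_iff)
  define B where "B = 2 * exp 1 * (\<beta> - 1) + 1"
  have "B > 0" using assms(3) by (simp add: B_def add_pos_pos)
  then have "x * B < 1"
    using mult_strict_right_mono[OF small, of B] by (simp add: x_def B_def)
  then have "2 * (\<beta> - 1) * x / (1 - x) < 1 / exp 1"
    using x by (simp add: B_def field_simps)
  with class_M_zdlog_bound[OF assms(1-4)] show ?thesis by (simp add: x_def)
qed

section \<open>The extremal function\<close>

definition extremal_M :: "nat \<Rightarrow> real \<Rightarrow> complex \<Rightarrow> complex" where
  "extremal_M n \<beta> z = z * exp (of_real (2 * (\<beta> - 1) / n) * Ln (1 - z ^ n))"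

lemma one_minus_power_not_nonpos_Reals:
  fixes z :: complex
  assumes "z \<in> unit_disk" "n \<ge> 1"
  shows "1 - z ^ n \<notin> \<real>\<^sub>\<le>\<^sub>0"
proof -
  have "norm (z ^ n) < 1" using assms by (simp add: norm_power power_less_one_iff)
  then have "Re (z ^ n) < 1" using complex_Re_le_cmod[of "z ^ n"] by linarith
  then show ?thesis by (simp add: complex_nonpos_Reals_iff)
qed

lemma zdlog_extremal_M:
  assumes n: "n \<ge> 1" and z: "z \<in> unit_disk"
  shows "zdlog (extremal_M n \<beta>) z = 1 - of_real (2 * (\<beta> - 1)) * z ^ n / (1 - z ^ n)"
proof (cases "z = 0")
  case False
  define c where "c = complex_of_real (2 * (\<beta> - 1) / n)"
  define X where "X = exp (c * Ln (1 - z ^ n))"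
  have nz: "1 - z ^ n \<notin> \<real>\<^sub>\<le>\<^sub>0" by (rule one_minus_power_not_nonpos_Reals[OF z n])
  have zz: "z * z ^ (n - 1) = z ^ n" using n by (cases n) auto
  have "1 - z ^ n \<noteq> 0" using nz by auto
  then have "X + z * (X * (c * (- (of_nat n * z ^ (n - 1))) / (1 - z ^ n)))
      = X * (1 - of_real (2 * (\<beta> - 1)) * z ^ n / (1 - z ^ n))"
    using n by (simp add: c_def field_simps zz[symmetric])
  moreover have "(extremal_M n \<beta> has_field_derivative
          X + z * (X * (c * (- (of_nat n * z ^ (n - 1))) / (1 - z ^ n)))) (at z)"
    unfolding extremal_M_def[abs_def] c_def[symmetric] X_def using nz
    by (auto intro!: derivative_eq_intros simp: field_simps)
  ultimately have "deriv (extremal_M n \<beta>) z = X * (1 - of_real (2 * (\<beta> - 1)) * z ^ n / (1 - z ^ n))"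
    by (metis DERIV_imp_deriv)
  moreover have "extremal_M n \<beta> z = z * X" by (simp add: extremal_M_def X_def c_def)
  moreover have "X \<noteq> 0" by (simp add: X_def)
  ultimately show ?thesis
    using False by (simp add: zdlog_def)
qed (use n in \<open>simp add: zdlog_def power_0_left\<close>)

lemma extremal_M_in_class_A:
  assumes n: "n \<ge> 1"
  shows "extremal_M n \<beta> \<in> class_A n"
proof -
  define Q where "Q w = exp (of_real (2 * (\<beta> - 1) / n) * Ln (1 - w))" for w :: complex
  have "Q holomorphic_on unit_disk"
    using one_minus_power_not_nonpos_Reals[OF _ order_refl]
    unfolding Q_def by (intro holomorphic_intros) auto
  define Q1 where "Q1 w = (if w = 0 then deriv Q 0 else (Q w - Q 0) / (w - 0))" for w
  have holQ1: "Q1 holomorphic_on unit_disk"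
    unfolding Q1_def by (rule pole_lemma_open[OF \<open>Q holomorphic_on unit_disk\<close>]) simp
  have "(\<lambda>z. z ^ n) ` unit_disk \<subseteq> unit_disk"
    using n by (auto simp: norm_power power_less_one_iff)
  then have "(\<lambda>z. Q1 (z ^ n)) holomorphic_on unit_disk"
    using holomorphic_on_compose_gen[OF _ holQ1] by (simp add: o_def holomorphic_intros)
  moreover have "extremal_M n \<beta> z - z = z ^ (n + 1) * Q1 (z ^ n)" for z
    by (cases "z = 0") (auto simp: extremal_M_def Q_def Q1_def field_simps)
  moreover have "extremal_M n \<beta> holomorphic_on unit_disk"
    using one_minus_power_not_nonpos_Reals[OF _ n]
    unfolding extremal_M_def[abs_def] by (intro holomorphic_intros) auto
  ultimately show ?thesis using class_A_iff_power_factor[OF n] by blast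
qed

lemma Re_div_1_minus_gt:
  fixes w :: complex
  assumes "norm w < 1"
  shows "Re (w / (1 - w)) > - 1 / 2"
proof -
  define a q where "a = Re w" and "q = Im w"
  have aq: "a\<^sup>2 + q\<^sup>2 < 1" using assms by (simp add: a_def q_def cmod_def)
  then have "a < 1" by (smt (verit) one_le_power zero_le_power2)
  then have D: "(1 - a)\<^sup>2 + q\<^sup>2 > 0" by (simp add: add_pos_nonneg)
  have "2 * (a * (1 - a) - q * q) + ((1 - a)\<^sup>2 + q\<^sup>2) = 1 - (a\<^sup>2 + q\<^sup>2)"
    by (simp add: power2_eq_square algebra_simps)
  with aq D have "(a * (1 - a) - q * q) / ((1 - a)\<^sup>2 + q\<^sup>2) > - 1 / 2"
    by (simp add: field_simps)
  then show ?thesis by (simp add: Re_divide a_def q_def)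
qed

lemma extremal_M_in_class_M:
  assumes n: "n \<ge> 1" and \<beta>: "\<beta> > 1"
  shows "extremal_M n \<beta> \<in> class_M n \<beta>"
proof -
  have "Re (zdlog (extremal_M n \<beta>) z) < \<beta>" if z: "z \<in> unit_disk" for z
  proof -
    define w where "w = z ^ n"
    have Re_affine: "Re (1 - of_real a * u) = 1 - a * Re u" for a u
      by simp
    have "Re (zdlog (extremal_M n \<beta>) z) = 1 - 2 * (\<beta> - 1) * Re (w / (1 - w))"
      using zdlog_extremal_M[OF n z] Re_affine[of _ "w / (1 - w)"]
      by (simp only: w_def times_divide_eq_right)
    moreover have "norm w < 1" using z n by (simp add: w_def norm_power power_less_one_iff)
    then have "2 * (\<beta> - 1) * (- 1 / 2) < 2 * (\<beta> - 1) * Re (w / (1 - w))"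
      using \<beta> by (intro mult_strict_left_mono Re_div_1_minus_gt) auto
    ultimately show ?thesis by (simp add: algebra_simps)
  qed
  then show ?thesis
    using extremal_M_in_class_A[OF n] by (simp add: class_M_def extremal_M_def)
qed

section \<open>The radius\<close>

lemma dilate_in_S_wp:
  assumes fM: "f \<in> class_M n \<beta>" and n: "n \<ge> 1" and \<beta>: "\<beta> > 1" and r: "0 < r" "r \<le> 1"
    and small: "r ^ n \<le> 1 / (2 * exp 1 * (\<beta> - 1) + 1)"
  shows "dilate r f \<in> S_wp n"
proof -
  have fA: "f \<in> class_A n" and nz: "\<forall>z\<in>unit_disk - {0}. f z \<noteq> 0"
    using fM by (auto simp: class_M_def)
  have gA: "dilate r f \<in> class_A n" by (rule class_A_dilate[OF fA r])
  have gnz: "\<forall>z\<in>unit_disk - {0}. dilate r f z \<noteq> 0"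
    using nz of_real_mult_in_unit_disk r by (auto simp: dilate_def)
  have "subordinate (zdlog (dilate r f)) wp"
  proof (rule subordinate_wp_if_near_1)
    show "zdlog (dilate r f) holomorphic_on unit_disk"
      by (rule holomorphic_zdlog_class_A[OF gA n gnz])
    show "zdlog (dilate r f) 0 = 1" by (simp add: zdlog_def)
    fix z :: complex assume z: "z \<in> unit_disk"
    have "norm (of_real r * z) < r" using z r by (simp add: norm_mult)
    then have "norm (of_real r * z) ^ n < r ^ n"
      using n by (intro power_strict_mono) auto
    with small have "norm (of_real r * z) ^ n < 1 / (2 * exp 1 * (\<beta> - 1) + 1)" by linarith
    with class_M_zdlog_near_1[OF fM n \<beta> of_real_mult_in_unit_disk[OF _ r(2) z]] r
    show "norm (zdlog (dilate r f) z - 1) < 1 / exp 1"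
      using zdlog_dilate[of f r z] fA z by (simp add: class_A_def)
  qed
  with gA gnz show ?thesis by (simp add: S_wp_def)
qed

lemma zdlog_extremal_M_of_real:
  assumes "n \<ge> 1" "0 \<le> x" "x < 1"
  shows "zdlog (extremal_M n \<beta>) (of_real x) = of_real (1 - 2 * (\<beta> - 1) * x ^ n / (1 - x ^ n))"
  using zdlog_extremal_M[OF assms(1), of "of_real x"] assms(2,3) by simp

lemma exists_between_power:
  fixes \<rho> r :: real
  assumes "0 \<le> \<rho>" "\<rho> < r ^ n" "0 < r" "n \<ge> 1"
  obtains x where "0 < x" "x < r" "\<rho> < x ^ n"
proof -
  define y where "y = (\<rho> + r ^ n) / 2"
  have y: "\<rho> < y" "y < r ^ n" "0 < y"
    using assms(1,2) unfolding y_def by (simp_all add: field_simps)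
  define x where "x = root n y"
  have "0 < n" using assms(4) by simp
  then have "x ^ n = y" "0 < x" using y(3) unfolding x_def by simp_all
  moreover have "x < r"
  proof (rule power_less_imp_less_base)
    show "x ^ n < r ^ n" using y(2) \<open>x ^ n = y\<close> by simp
  qed (use assms(3) in simp)
  ultimately show ?thesis using that y(1) by blast
qed

lemma dilate_extremal_M_not_in_S_wp:
  assumes n: "n \<ge> 1" and \<beta>: "\<beta> > 1" and r: "0 < r" "r \<le> 1"
    and large: "r ^ n > 1 / (2 * exp 1 * (\<beta> - 1) + 1)"
  shows "dilate r (extremal_M n \<beta>) \<notin> S_wp n"
proof
  assume "dilate r (extremal_M n \<beta>) \<in> S_wp n"
  then obtain \<omega> where \<omega>: "\<omega> ` unit_disk \<subseteq> unit_disk"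
    and sub: "\<forall>z\<in>unit_disk. zdlog (dilate r (extremal_M n \<beta>)) z = wp (\<omega> z)"
    by (auto simp: S_wp_def subordinate_def)
  obtain x where "0 < x" "x < r" and x_large: "1 / (2 * exp 1 * (\<beta> - 1) + 1) < x ^ n"
    using exists_between_power[OF _ large r(1) n] \<beta> by (auto simp: add_pos_pos less_imp_le)
  then have "x ^ n < 1" using r n by (simp add: power_less_one_iff)
  define t where "t = complex_of_real (x / r)"
  have t: "t \<in> unit_disk" using \<open>0 < x\<close> \<open>x < r\<close> by (simp add: t_def norm_divide)
  have "wp (\<omega> t) = zdlog (dilate r (extremal_M n \<beta>)) t" using sub t by simp
  also have "\<dots> = zdlog (extremal_M n \<beta>) (of_real x)"
    using zdlog_dilate[OF _ r t] extremal_M_in_class_A[OF n] r by (simp add: class_A_def t_def)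
  also have "\<dots> = of_real (1 - 2 * (\<beta> - 1) * x ^ n / (1 - x ^ n))"
    using zdlog_extremal_M_of_real[OF n] \<open>0 < x\<close> \<open>x < r\<close> r by simp
  finally have "1 - 1 / exp 1 \<le> 1 - 2 * (\<beta> - 1) * x ^ n / (1 - x ^ n)"
    using \<omega> t by (intro wp_real_value_ge) (auto simp: image_subset_iff)
  moreover have "1 < x ^ n * (2 * exp 1 * (\<beta> - 1) + 1)"
    using x_large \<beta> by (simp add: divide_less_eq add_pos_pos)
  ultimately show False using \<open>x ^ n < 1\<close> by (simp add: field_simps)
qed

lemma powr_minus_inverse_power:
  fixes B :: real
  assumes "B > 0" "n \<ge> 1"
  shows "(B powr (- 1 / real n)) ^ n = 1 / B"
proof -
  have "(B powr (- 1 / real n)) ^ n = B powr (- 1 / real n * real n)"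
    using assms by (simp add: powr_realpow[symmetric] powr_powr)
  also have "\<dots> = 1 / B"
    using assms by (simp add: powr_minus_divide)
  finally show ?thesis .
qed

theorem mainTheorem10:
  fixes n :: nat and \<beta> :: real
  assumes "n \<ge> 1" and "\<beta> > 1"
  shows "is_sharp_radius (S_wp n) (class_M n \<beta>)
           ((2 * exp 1 * (\<beta> - 1) + 1) powr (- 1 / real n))"
proof -
  define B where "B = 2 * exp 1 * (\<beta> - 1) + 1"
  define R where "R = B powr (- 1 / real n)"
  have "B > 1" using assms by (simp add: B_def)
  then have "R > 0" and R_pow: "R ^ n = 1 / B"
    using powr_minus_inverse_power[of B n] assms by (simp_all add: R_def)
  have R_le_1: "R \<le> 1"
    using powr_less_mono[of "- 1 / real n" 0 B] \<open>B > 1\<close> assms by (simp add: R_def)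
  have "R \<in> admissible_radii (S_wp n) (class_M n \<beta>)"
    using \<open>R > 0\<close> R_le_1 dilate_in_S_wp[OF _ assms] power_mono[of _ R n] R_pow
    by (auto simp: admissible_radii_def dilate_eq B_def)
  moreover have "r \<le> R" if "r \<in> admissible_radii (S_wp n) (class_M n \<beta>)" for r
  proof (rule ccontr)
    assume "\<not> r \<le> R"
    then have "R ^ n < r ^ n" using \<open>R > 0\<close> assms by (intro power_strict_mono) auto
    with that R_pow show False
      using dilate_extremal_M_not_in_S_wp[OF assms] extremal_M_in_class_M[OF assms]
      by (auto simp: admissible_radii_def dilate_eq B_def)
  qed
  ultimately show ?thesis by (simp add: is_sharp_radius_def R_def B_def)
qed

end
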